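(* Let $\varphi:\mathrm{Mag}(A)\to\mathcal T^{pl}_A$ be the unique linear map with $\varphi(a)=\bullet_a$ for all $a\in A$ and $\varphi(\sigma\rhd\tau)=\varphi(\sigma)\curvearrowright\varphi(\tau)$ for all $\sigma,\tau\in\mathrm{Mag}(A)$. Then $\varphi$ is a linear isomorphism; hence the magmatic algebras $(\mathrm{Mag}(A),\rhd)$ and $(\mathcal T^{pl}_A,\curvearrowright)$ are isomorphic.
   Context: $A$ is a finite set and $\mathbf k$ a field of characteristic zero. $(\mathrm{Mag}(A),\rhd)$ is the free magmatic algebra on $A$ (the linear span of the free magma on $A$, with bilinear product $\rhd$ and no axioms). $T^{pl}_A$ is the set of planar rooted trees with vertices decorated by elements of $A$, $\bullet_a$ the one-vertex tree decorated by $a$, and $\mathcal T^{pl}_A$ the vector space with basis $T^{pl}_A$. The right Butcher product $\sigma\diamond\tau$ of two trees is the tree obtained by grafting the root of $\sigma$ onto the root of $\tau$ as its new rightmost child; every tree with at least two vertices is uniquely of the form $\tau_1\diamond\tau_2$. Left grafting $\curvearrowright:\mathcal T^{pl}_A\times\mathcal T^{pl}_A\to\mathcal T^{pl}_A$ is the bilinear product defined recursively by $\tau\curvearrowright\bullet_a:=\tau\diamond\bullet_a$ and $\tau\curvearrowright(\tau_1\diamond\tau_2):=(\tau\curvearrowright\tau_1)\diamond\tau_2+\tau_1\diamond(\tau\curvearrowright\tau_2)$ for trees $\tau,\tau_1,\tau_2$ (with $\diamond$ extended bilinearly). *)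

theory Defs
  imports Complex_Main "HOL-Library.Poly_Mapping"
begin

(* Free magma on the decoration alphabet 'a (A is modelled as a finite type 'a). *)
datatype 'a magma = MLeaf 'a | MOp "'a magma" "'a magma"

datatype 'a ptree = Node 'a "'a ptree list"

definition sc :: "'k::semiring_0 \<Rightarrow> ('b \<Rightarrow>\<^sub>0 'k) \<Rightarrow> ('b \<Rightarrow>\<^sub>0 'k)" where
  "sc c v = Poly_Mapping.map (\<lambda>x. c * x) v"

definition bilin :: "('b \<Rightarrow> 'c \<Rightarrow> ('d \<Rightarrow>\<^sub>0 'k::semiring_0))
    \<Rightarrow> ('b \<Rightarrow>\<^sub>0 'k) \<Rightarrow> ('c \<Rightarrow>\<^sub>0 'k) \<Rightarrow> ('d \<Rightarrow>\<^sub>0 'k)" where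
  "bilin f x y = (\<Sum>s\<in>Poly_Mapping.keys x. \<Sum>t\<in>Poly_Mapping.keys y. sc (Poly_Mapping.lookup x s * Poly_Mapping.lookup y t) (f s t))"

definition mprod :: "('a magma \<Rightarrow>\<^sub>0 'k::semiring_1) \<Rightarrow> ('a magma \<Rightarrow>\<^sub>0 'k) \<Rightarrow> ('a magma \<Rightarrow>\<^sub>0 'k)" where
  "mprod = bilin (\<lambda>s t. Poly_Mapping.single (MOp s t) 1)"

fun butcher :: "'a ptree \<Rightarrow> 'a ptree \<Rightarrow> 'a ptree" where
  "butcher s (Node a ts) = Node a (ts @ [s])"

definition bdia :: "('a ptree \<Rightarrow>\<^sub>0 'k::semiring_1) \<Rightarrow> ('a ptree \<Rightarrow>\<^sub>0 'k) \<Rightarrow> ('a ptree \<Rightarrow>\<^sub>0 'k)" where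
  "bdia = bilin (\<lambda>s t. Poly_Mapping.single (butcher s t) 1)"

(* left grafting on basis trees, by the recursion of the paper:
   tau \<curvearrowright> \<bullet>_a = tau \<diamond> \<bullet>_a,
   tau \<curvearrowright> (t1 \<diamond> t2) = (tau \<curvearrowright> t1) \<diamond> t2 + t1 \<diamond> (tau \<curvearrowright> t2),
   where Node a ts with ts \<noteq> [] equals (last ts) \<diamond> (Node a (butlast ts)). *)
lemma size_last_lt: "ts \<noteq> [] \<Longrightarrow> size (last ts) < Suc (size_list size ts)"
proof -
  assume "ts \<noteq> []"
  then obtain ys y where e: "ts = ys @ [y]" by (metis append_butlast_last_id)
  show ?thesis by (simp add: e)
qed
lemma size_butlast_lt: "ts \<noteq> [] \<Longrightarrow> size_list size (butlast (ts :: 'a ptree list)) < size_list size ts"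
proof -
  assume "ts \<noteq> []"
  then obtain ys y where e: "ts = ys @ [y]" by (metis append_butlast_last_id)
  show ?thesis by (simp add: e)
qed

function graft_b :: "'a ptree \<Rightarrow> 'a ptree \<Rightarrow> ('a ptree \<Rightarrow>\<^sub>0 'k::semiring_1)" where
  "graft_b \<tau> (Node a ts) =
     (if ts = [] then Poly_Mapping.single (butcher \<tau> (Node a [])) 1
      else bdia (graft_b \<tau> (last ts)) (Poly_Mapping.single (Node a (butlast ts)) 1)
         + bdia (Poly_Mapping.single (last ts) 1) (graft_b \<tau> (Node a (butlast ts))))"
  by pat_completeness auto
termination
  apply (relation "measure (\<lambda>(_, t). size t)")
    apply simp
   apply (auto simp: size_last_lt size_butlast_lt)
  done


definition graft :: "('a ptree \<Rightarrow>\<^sub>0 'k::semiring_1) \<Rightarrow> ('a ptree \<Rightarrow>\<^sub>0 'k) \<Rightarrow> ('a ptree \<Rightarrow>\<^sub>0 'k)" where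
  "graft = bilin graft_b"

end

theory Submission
  imports Defs
begin

(*
  Map a word a \<rhd> b to the tree obtained from the tree of b by attaching the tree of a as
  a new leftmost child of the root; this is a bijection from the free magma onto planar trees.
  Left grafting \<tau> \<curvearrowright> t grafts \<tau> as leftmost child onto each vertex of t in turn: the
  graft at the root is exactly the tree above, and every other term has the same number of
  vertices but a strictly larger sum of vertex depths.  So \<phi> sends each word to its tree plus
  strictly deeper trees, i.e. \<phi> is unitriangular with respect to a well-founded order on the
  basis, hence bijective; uniqueness holds because \<phi> is determined on words.
*)

lemma lookup_sc [simp]: "Poly_Mapping.lookup (sc c v) k = c * Poly_Mapping.lookup v k"
  unfolding sc_def by transfer (auto simp: when_def)

lemma sc_add_right: "sc c (x + y) = sc c x + sc c y"
  by (rule poly_mapping_eqI) (simp add: lookup_add algebra_simps)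

lemma sc_add_left: "sc (a + b) x = sc a x + sc b x"
  by (rule poly_mapping_eqI) (simp add: lookup_add algebra_simps)

lemma sc_sc: "sc a (sc b x) = sc (a * b) x"
  by (rule poly_mapping_eqI) (simp add: algebra_simps)

lemma sc_one [simp]: "sc (1::'k::semiring_1) x = x"
  by (rule poly_mapping_eqI) simp

lemma sc_zero_left [simp]: "sc 0 x = 0"
  by (rule poly_mapping_eqI) simp

lemma sc_sum_right: "sc c (sum f A) = (\<Sum>a\<in>A. sc c (f a))"
  by (rule poly_mapping_eqI) (simp add: lookup_sum sum_distrib_left)

lemma keys_sc_subset: "Poly_Mapping.keys (sc c v) \<subseteq> Poly_Mapping.keys v"
  by (auto simp: in_keys_iff)

lemma vector_space_sc: "vector_space (sc :: 'k::field \<Rightarrow> ('b \<Rightarrow>\<^sub>0 'k) \<Rightarrow> _)"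
  by unfold_locales (simp_all add: sc_add_right sc_add_left sc_sc)

lemma poly_mapping_sum_single:
  "x = (\<Sum>m\<in>Poly_Mapping.keys x. sc (Poly_Mapping.lookup x m) (Poly_Mapping.single m (1::'k::semiring_1)))"
proof (rule poly_mapping_eqI)
  fix k
  show "Poly_Mapping.lookup x k = Poly_Mapping.lookup
      (\<Sum>m\<in>Poly_Mapping.keys x. sc (Poly_Mapping.lookup x m) (Poly_Mapping.single m 1)) k"
    by (simp add: lookup_sum lookup_single when_def if_distrib[of "(*) _"] in_keys_iff cong: if_cong)
qed

definition lin_ext :: "('b \<Rightarrow> ('c \<Rightarrow>\<^sub>0 'k::semiring_0)) \<Rightarrow> ('b \<Rightarrow>\<^sub>0 'k) \<Rightarrow> ('c \<Rightarrow>\<^sub>0 'k)" where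
  "lin_ext g x = (\<Sum>m\<in>Poly_Mapping.keys x. sc (Poly_Mapping.lookup x m) (g m))"

lemma lin_ext_superset:
  assumes "finite M" "Poly_Mapping.keys x \<subseteq> M"
  shows "lin_ext g x = (\<Sum>m\<in>M. sc (Poly_Mapping.lookup x m) (g m))"
  unfolding lin_ext_def by (rule sum.mono_neutral_left) (use assms in \<open>auto simp: in_keys_iff\<close>)

lemma lin_ext_add: "lin_ext g (x + y) = lin_ext g x + lin_ext g y"
proof -
  let ?M = "Poly_Mapping.keys x \<union> Poly_Mapping.keys y"
  have "lin_ext g z = (\<Sum>m\<in>?M. sc (Poly_Mapping.lookup z m) (g m))" if "Poly_Mapping.keys z \<subseteq> ?M" for z
    by (rule lin_ext_superset) (use that in auto)
  then show ?thesis
    using keys_add[of x y] by (simp add: lookup_add sc_add_left sum.distrib)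
qed

lemma lin_ext_sc: "lin_ext g (sc c x) = sc c (lin_ext g x)"
proof -
  have "lin_ext g (sc c x) = (\<Sum>m\<in>Poly_Mapping.keys x. sc (Poly_Mapping.lookup (sc c x) m) (g m))"
    by (rule lin_ext_superset) (auto intro: keys_sc_subset[THEN subsetD])
  then show ?thesis by (simp add: lin_ext_def sc_sum_right sc_sc)
qed

lemma lin_ext_zero [simp]: "lin_ext g 0 = 0"
  by (simp add: lin_ext_def)

lemma lin_ext_sum: "lin_ext g (sum h A) = (\<Sum>a\<in>A. lin_ext g (h a))"
  by (induction A rule: infinite_finite_induct) (simp_all add: lin_ext_add)

lemma lin_ext_single [simp]: "lin_ext g (Poly_Mapping.single m (1::'k::semiring_1)) = g m"
  by (simp add: lin_ext_def)

lemma lin_ext_lin_ext: "lin_ext g (lin_ext h x) = lin_ext (\<lambda>m. lin_ext g (h m)) x"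
  unfolding lin_ext_def[of h] lin_ext_def[of "\<lambda>m. lin_ext g (h m)"] by (simp add: lin_ext_sum lin_ext_sc)

lemma linear_lin_ext: "Vector_Spaces.linear sc sc (lin_ext g :: ('b \<Rightarrow>\<^sub>0 'k::field) \<Rightarrow> ('c \<Rightarrow>\<^sub>0 'k))"
  unfolding module_hom_iff_linear[symmetric] module_hom_def module_hom_axioms_def
  using vector_space_sc[where 'k='k and 'b='b] vector_space_sc[where 'k='k and 'b='c]
  by (simp add: module_iff_vector_space lin_ext_add lin_ext_sc)

lemma linear_eq_lin_ext:
  fixes f :: "('b \<Rightarrow>\<^sub>0 'k::field) \<Rightarrow> ('c \<Rightarrow>\<^sub>0 'k)"
  assumes "Vector_Spaces.linear sc sc f" "\<And>m. f (Poly_Mapping.single m 1) = g m"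
  shows "f = lin_ext g"
proof
  interpret Vector_Spaces.linear sc sc f by (fact assms(1))
  fix x
  have "f x = f (\<Sum>m\<in>Poly_Mapping.keys x. sc (Poly_Mapping.lookup x m) (Poly_Mapping.single m 1))"
    by (subst poly_mapping_sum_single) (rule refl)
  then show "f x = lin_ext g x"
    by (simp add: sum scale assms(2) lin_ext_def)
qed

lemma bilin_eq_lin_ext_left:
  "bilin f x y = lin_ext (\<lambda>s. lin_ext (f s) y) (x :: _ \<Rightarrow>\<^sub>0 'k::comm_semiring_1)"
  by (simp add: bilin_def lin_ext_def sc_sum_right sc_sc)

lemma bilin_eq_lin_ext_right:
  "bilin f x y = lin_ext (\<lambda>t. lin_ext (\<lambda>s. f s t) x) (y :: _ \<Rightarrow>\<^sub>0 'k::comm_semiring_1)"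
  unfolding bilin_def lin_ext_def sc_sum_right sc_sc
  by (subst sum.swap) (simp add: ac_simps)

lemma bilin_single [simp]:
  "bilin f (Poly_Mapping.single s (1::'k::comm_semiring_1)) (Poly_Mapping.single t 1) = f s t"
  by (simp add: bilin_eq_lin_ext_left)

lemma lin_ext_bilin:
  "lin_ext g (bilin f x y) = bilin (\<lambda>s t. lin_ext g (f s t)) x (y :: _ \<Rightarrow>\<^sub>0 'k::comm_semiring_1)"
  by (simp add: bilin_eq_lin_ext_left lin_ext_lin_ext)

lemma bilin_lin_ext_left: "bilin f (lin_ext g x) y = lin_ext (\<lambda>s. bilin f (g s) y) (x :: _ \<Rightarrow>\<^sub>0 'k::comm_semiring_1)"
  by (simp only: bilin_eq_lin_ext_left lin_ext_lin_ext)

lemma bilin_lin_ext_right: "bilin f x (lin_ext h y) = lin_ext (\<lambda>t. bilin f x (h t)) (y :: _ \<Rightarrow>\<^sub>0 'k::comm_semiring_1)"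
  by (simp only: bilin_eq_lin_ext_right lin_ext_lin_ext)

lemma bilin_lin_ext:
  "bilin f (lin_ext g x) (lin_ext h y) = bilin (\<lambda>s t. bilin f (g s) (h t)) x (y :: _ \<Rightarrow>\<^sub>0 'k::comm_semiring_1)"
  unfolding bilin_lin_ext_left bilin_lin_ext_right
  by (rule bilin_eq_lin_ext_right[symmetric])

lemma keys_bilin:
  "Poly_Mapping.keys (bilin f x y) \<subseteq>
     (\<Union>s\<in>Poly_Mapping.keys x. \<Union>t\<in>Poly_Mapping.keys y. Poly_Mapping.keys (f s t))"
  unfolding bilin_def by (intro order_trans[OF keys_sum] UN_mono order_refl keys_sc_subset)

lemma lookup_bilin_concentrated:
  assumes "s0 \<in> Poly_Mapping.keys x" "t0 \<in> Poly_Mapping.keys y"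
    and "\<And>s t. s \<in> Poly_Mapping.keys x \<Longrightarrow> t \<in> Poly_Mapping.keys y \<Longrightarrow> (s, t) \<noteq> (s0, t0) \<Longrightarrow>
           Poly_Mapping.lookup (f s t) k = 0"
  shows "Poly_Mapping.lookup (bilin f x y) k =
           Poly_Mapping.lookup x s0 * Poly_Mapping.lookup y t0 * Poly_Mapping.lookup (f s0 t0) k"
proof -
  let ?G = "\<lambda>(s, t). Poly_Mapping.lookup x s * Poly_Mapping.lookup y t * Poly_Mapping.lookup (f s t) k"
  have "Poly_Mapping.lookup (bilin f x y) k = (\<Sum>p\<in>Poly_Mapping.keys x \<times> Poly_Mapping.keys y. ?G p)"
    by (simp add: bilin_def lookup_sum sum.cartesian_product case_prod_beta)
  also have "\<dots> = (\<Sum>p\<in>{(s0, t0)}. ?G p)"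
    using assms by (intro sum.mono_neutral_right) force+
  finally show ?thesis by simp
qed

lemma lookup_linear_image:
  fixes f :: "('b \<Rightarrow>\<^sub>0 'k::field) \<Rightarrow> ('c \<Rightarrow>\<^sub>0 'k)"
  assumes "Vector_Spaces.linear sc sc f"
  shows "Poly_Mapping.lookup (f z) k =
           (\<Sum>m\<in>Poly_Mapping.keys z. Poly_Mapping.lookup z m * Poly_Mapping.lookup (f (Poly_Mapping.single m 1)) k)"
proof -
  have "f z = lin_ext (\<lambda>m. f (Poly_Mapping.single m 1)) z"
    by (rule fun_cong[OF linear_eq_lin_ext[OF assms]]) (rule refl)
  then show ?thesis
    by (simp add: lin_ext_def lookup_sum)
qed

definition unitriangular ::
    "('b \<Rightarrow> 'c) \<Rightarrow> ('c \<Rightarrow> nat) \<Rightarrow> (('b \<Rightarrow>\<^sub>0 'k::semiring_1) \<Rightarrow> ('c \<Rightarrow>\<^sub>0 'k)) \<Rightarrow> bool" where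
  "unitriangular \<psi> rank f \<longleftrightarrow> (\<forall>m. Poly_Mapping.lookup (f (Poly_Mapping.single m 1)) (\<psi> m) = 1 \<and>
     (\<forall>T\<in>Poly_Mapping.keys (f (Poly_Mapping.single m 1)). T \<noteq> \<psi> m \<longrightarrow> rank T < rank (\<psi> m)))"

lemma unitriangular_rank_less:
  assumes "unitriangular \<psi> rank f" "inj \<psi>"
    and "\<psi> m \<in> Poly_Mapping.keys (f (Poly_Mapping.single m' 1))" "m' \<noteq> m"
  shows "rank (\<psi> m) < rank (\<psi> m')"
  using assms unfolding unitriangular_def by (metis injD)

lemma inj_if_unitriangular:
  fixes f :: "('b \<Rightarrow>\<^sub>0 'k::field) \<Rightarrow> ('c \<Rightarrow>\<^sub>0 'k)"
  assumes lin: "Vector_Spaces.linear sc sc f" and "inj \<psi>" and tri: "unitriangular \<psi> rank f"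
  shows "inj f"
proof -
  interpret Vector_Spaces.linear sc sc f by (fact lin)
  have "z = 0" if "f z = 0" for z
  proof (rule ccontr)
    assume "z \<noteq> 0"
    define r where "r = Max ((rank \<circ> \<psi>) ` Poly_Mapping.keys z)"
    have "r \<in> (rank \<circ> \<psi>) ` Poly_Mapping.keys z"
      unfolding r_def using \<open>z \<noteq> 0\<close> by (intro Max_in) auto
    then obtain m where m: "m \<in> Poly_Mapping.keys z" "rank (\<psi> m) = r"
      by auto
    have off_diagonal: "Poly_Mapping.lookup (f (Poly_Mapping.single m' 1)) (\<psi> m) = 0"
      if "m' \<in> Poly_Mapping.keys z" "m' \<noteq> m" for m'
    proof (rule ccontr)
      assume "Poly_Mapping.lookup (f (Poly_Mapping.single m' 1)) (\<psi> m) \<noteq> 0"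
      then have "rank (\<psi> m) < rank (\<psi> m')"
        using unitriangular_rank_less[OF tri \<open>inj \<psi>\<close>] that(2) by (simp add: in_keys_iff)
      moreover have "rank (\<psi> m') \<le> r"
        using that(1) by (simp add: r_def)
      ultimately show False
        using m(2) by simp
    qed
    have "Poly_Mapping.lookup (f z) (\<psi> m) = (\<Sum>m'\<in>Poly_Mapping.keys z.
        Poly_Mapping.lookup z m' * Poly_Mapping.lookup (f (Poly_Mapping.single m' 1)) (\<psi> m))"
      by (rule lookup_linear_image[OF lin])
    also have "\<dots> = (\<Sum>m'\<in>{m}. Poly_Mapping.lookup z m' * Poly_Mapping.lookup (f (Poly_Mapping.single m' 1)) (\<psi> m))"
      using m(1) off_diagonal by (intro sum.mono_neutral_right) auto
    also have "\<dots> = Poly_Mapping.lookup z m"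
      using tri by (simp add: unitriangular_def)
    finally show False
      using \<open>f z = 0\<close> m(1) by (simp add: in_keys_iff)
  qed
  then show ?thesis
    by (simp add: inj_iff_eq_0)
qed

lemma surj_if_unitriangular:
  fixes f :: "('b \<Rightarrow>\<^sub>0 'k::field) \<Rightarrow> ('c \<Rightarrow>\<^sub>0 'k)"
  assumes lin: "Vector_Spaces.linear sc sc f" and "surj \<psi>" and tri: "unitriangular \<psi> rank f"
  shows "surj f"
proof -
  interpret Vector_Spaces.linear sc sc f by (fact lin)
  have range_subspace: "vs2.subspace (range f)"
    by (rule subspace_image[OF vs1.subspace_UNIV])
  have in_range: "v \<in> range f" if "\<And>T. T \<in> Poly_Mapping.keys v \<Longrightarrow> Poly_Mapping.single T 1 \<in> range f" for v
    using that by (subst poly_mapping_sum_single)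
      (intro vs2.subspace_sum[OF range_subspace] vs2.subspace_scale[OF range_subspace])
  have "Poly_Mapping.single T 1 \<in> range f" for T
  proof (induction "rank T" arbitrary: T rule: less_induct)
    case less
    obtain m where T: "T = \<psi> m"
      using \<open>surj \<psi>\<close> by (metis surjD)
    define R where "R = f (Poly_Mapping.single m 1) - Poly_Mapping.single T 1"
    have "rank T' < rank T" if "T' \<in> Poly_Mapping.keys R" for T'
      using that tri by (auto simp: R_def T unitriangular_def in_keys_iff lookup_minus lookup_single when_def
          split: if_splits)
    then obtain r where "f r = R"
      using in_range less by blast
    then have "f (Poly_Mapping.single m 1 - r) = Poly_Mapping.single T 1"
      by (simp add: diff R_def)
    then show ?case
      by (metis rangeI)
  qed
  then show ?thesis
    using in_range by blast
qed

(* The recursion equation of graft_b has no constructor pattern, so the simplifier would unfold it forever. *)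
declare graft_b.simps [simp del]

fun nverts :: "'a ptree \<Rightarrow> nat" where
  "nverts (Node a ts) = Suc (\<Sum>t\<leftarrow>ts. nverts t)"

fun depth_sum :: "'a ptree \<Rightarrow> nat" where
  "depth_sum (Node a ts) = (\<Sum>t\<leftarrow>ts. depth_sum t + nverts t)"

fun cons_child :: "'a ptree \<Rightarrow> 'a ptree \<Rightarrow> 'a ptree" where
  "cons_child s (Node a ts) = Node a (s # ts)"

lemma nverts_pos: "0 < nverts t"
  by (cases t) simp

lemma nverts_butcher [simp]: "nverts (butcher s t) = nverts s + nverts t"
  by (cases t) simp

lemma depth_sum_butcher [simp]: "depth_sum (butcher s t) = depth_sum t + depth_sum s + nverts s"
  by (cases t) simp

lemma nverts_cons_child [simp]: "nverts (cons_child s t) = nverts s + nverts t"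
  by (cases t) simp

lemma depth_sum_cons_child [simp]: "depth_sum (cons_child s t) = depth_sum s + nverts s + depth_sum t"
  by (cases t) simp

lemma cons_child_butcher: "cons_child s (butcher l t) = butcher l (cons_child s t)"
  by (cases t) simp

lemma butcher_eq_iff [simp]: "butcher l t = butcher l t' \<longleftrightarrow> t = t'"
  by (cases t; cases t') simp

lemma depth_sum_le: "depth_sum t \<le> nverts t * nverts t"
proof (induction t)
  case (Node a ts)
  let ?n = "\<Sum>t\<leftarrow>ts. nverts t"
  have "depth_sum (Node a ts) \<le> (\<Sum>t\<leftarrow>ts. nverts t * nverts t + nverts t)"
    using Node.IH by (auto intro!: sum_list_mono)
  also have "\<dots> \<le> ?n * ?n + ?n"
    by (induction ts) (simp_all add: algebra_simps)
  also have "\<dots> \<le> nverts (Node a ts) * nverts (Node a ts)"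
    by simp
  finally show ?case .
qed

definition deeper :: "'a ptree \<Rightarrow> 'a ptree \<Rightarrow> bool" where
  "deeper T L \<longleftrightarrow> nverts T = nverts L \<and> depth_sum L < depth_sum T"

lemma deeper_trans: "deeper T U \<Longrightarrow> deeper U L \<Longrightarrow> deeper T L"
  by (simp add: deeper_def)

lemma not_deeper_refl: "\<not> deeper T T"
  by (simp add: deeper_def)

lemma deeper_cons_child:
  assumes "s = S \<or> deeper s S" "u = U \<or> deeper u U" "(s, u) \<noteq> (S, U)"
  shows "deeper (cons_child s u) (cons_child S U)"
  using assms by (auto simp: deeper_def)

(* The subtraction does not truncate, by depth_sum_le. *)
definition tree_rank :: "'a ptree \<Rightarrow> nat" where
  "tree_rank T = nverts T * nverts T - depth_sum T"

lemma deeper_rank_less: "deeper T L \<Longrightarrow> tree_rank T < tree_rank L"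
  using depth_sum_le[of T] by (auto simp: tree_rank_def deeper_def intro!: diff_less_mono2)

definition leading_term :: "'a ptree \<Rightarrow> ('a ptree \<Rightarrow>\<^sub>0 'k::semiring_1) \<Rightarrow> bool" where
  "leading_term L v \<longleftrightarrow> Poly_Mapping.lookup v L = 1 \<and> (\<forall>T\<in>Poly_Mapping.keys v. T \<noteq> L \<longrightarrow> deeper T L)"

lemma leading_term_single: "leading_term L (Poly_Mapping.single L 1)"
  by (simp add: leading_term_def)

lemma leading_term_in_keys: "leading_term L v \<Longrightarrow> L \<in> Poly_Mapping.keys v"
  by (simp add: leading_term_def in_keys_iff)

lemma leading_term_add_deeper:
  assumes "leading_term L y" "\<forall>T\<in>Poly_Mapping.keys x. deeper T L"
  shows "leading_term L (x + y)"
proof -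
  have "L \<notin> Poly_Mapping.keys x"
    using assms(2) not_deeper_refl by blast
  then show ?thesis
    using assms keys_add[of x y] by (auto simp: leading_term_def lookup_add in_keys_iff)
qed

lemma keys_bdia:
  "Poly_Mapping.keys (bdia x y) \<subseteq> {butcher s t |s t. s \<in> Poly_Mapping.keys x \<and> t \<in> Poly_Mapping.keys y}"
  unfolding bdia_def using keys_bilin[of _ x y] by fastforce

lemma leading_term_bdia_single:
  assumes "leading_term L y"
  shows "leading_term (butcher l L) (bdia (Poly_Mapping.single l 1) y)"
proof -
  have "Poly_Mapping.lookup (bdia (Poly_Mapping.single l 1) y) (butcher l L) = Poly_Mapping.lookup y L"
    unfolding bdia_def
    by (subst lookup_bilin_concentrated[of l _ L])
      (use leading_term_in_keys[OF assms] in \<open>auto simp: lookup_single\<close>)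
  moreover have "deeper T (butcher l L)"
    if "T \<in> Poly_Mapping.keys (bdia (Poly_Mapping.single l 1) y)" "T \<noteq> butcher l L" for T
    using that keys_bdia assms by (force simp: leading_term_def deeper_def)
  ultimately show ?thesis
    using assms by (simp add: leading_term_def)
qed

lemma leading_term_graft_b: "leading_term (cons_child \<tau> t) (graft_b \<tau> t :: _ \<Rightarrow>\<^sub>0 'k::comm_semiring_1)"
proof (induction \<tau> t rule: graft_b.induct)
  case (1 \<tau> a ts)
  show ?case
  proof (cases "ts = []")
    case True
    then show ?thesis
      by (subst graft_b.simps) (simp add: leading_term_single)
  next
    case False
    define l t0 where "l = last ts" and "t0 = Node a (butlast ts)"
    have t: "Node a ts = butcher l t0"
      using False by (simp add: l_def t0_def)
    have IH_l: "leading_term (cons_child \<tau> l) (graft_b \<tau> l :: _ \<Rightarrow>\<^sub>0 'k)"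
      using "1.IH"(1)[OF False] by (simp add: l_def)
    have IH_t0: "leading_term (cons_child \<tau> t0) (graft_b \<tau> t0 :: _ \<Rightarrow>\<^sub>0 'k)"
      using "1.IH"(2)[OF False] by (simp add: t0_def)
    have split: "graft_b \<tau> (Node a ts) =
        bdia (graft_b \<tau> l) (Poly_Mapping.single t0 1) + bdia (Poly_Mapping.single l 1) (graft_b \<tau> t0)"
      using False by (subst graft_b.simps) (simp add: l_def t0_def)
    (* the terms in which \<tau> is grafted inside the last child l rather than at the root *)
    have deeper_left: "deeper T (cons_child \<tau> (Node a ts))"
      if T: "T \<in> Poly_Mapping.keys (bdia (graft_b \<tau> l :: _ \<Rightarrow>\<^sub>0 'k) (Poly_Mapping.single t0 1))" for T
    proof -
      obtain S where S: "S \<in> Poly_Mapping.keys (graft_b \<tau> l :: _ \<Rightarrow>\<^sub>0 'k)" and T: "T = butcher S t0"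
        using T keys_bdia by fastforce
      have "nverts S = nverts (cons_child \<tau> l)" "depth_sum (cons_child \<tau> l) \<le> depth_sum S"
        using S IH_l by (auto simp: leading_term_def deeper_def)
      then show ?thesis
        using nverts_pos[of \<tau>] by (simp add: T t deeper_def cons_child_butcher)
    qed
    have leading_right: "leading_term (cons_child \<tau> (Node a ts))
        (bdia (Poly_Mapping.single l 1) (graft_b \<tau> t0 :: _ \<Rightarrow>\<^sub>0 'k))"
      unfolding t cons_child_butcher by (rule leading_term_bdia_single[OF IH_t0])
    show ?thesis
      unfolding split by (intro leading_term_add_deeper leading_right ballI deeper_left)
  qed
qed

lemma leading_term_graft:
  assumes x: "leading_term S x" and y: "leading_term U y"
  shows "leading_term (cons_child S U) (graft x y :: _ \<Rightarrow>\<^sub>0 'k::comm_semiring_1)"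
proof -
  let ?L = "cons_child S U"
  have off_diagonal: "deeper T ?L"
    if "s \<in> Poly_Mapping.keys x" "u \<in> Poly_Mapping.keys y" "(s, u) \<noteq> (S, U)"
      and "T \<in> Poly_Mapping.keys (graft_b s u :: _ \<Rightarrow>\<^sub>0 'k)" for s u T
  proof -
    have "deeper (cons_child s u) ?L"
      using that x y by (intro deeper_cons_child) (auto simp: leading_term_def)
    then show ?thesis
      using that(4) leading_term_graft_b[of s u, where 'k='k]
      by (auto simp: leading_term_def intro: deeper_trans)
  qed
  have "Poly_Mapping.lookup (graft x y) ?L = Poly_Mapping.lookup x S * Poly_Mapping.lookup y U *
      Poly_Mapping.lookup (graft_b S U :: _ \<Rightarrow>\<^sub>0 'k) ?L"
    unfolding graft_def using leading_term_in_keys[OF x] leading_term_in_keys[OF y]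
    by (rule lookup_bilin_concentrated) (metis in_keys_iff off_diagonal not_deeper_refl)
  then have "Poly_Mapping.lookup (graft x y) ?L = 1"
    using x y leading_term_graft_b[of S U, where 'k='k] by (simp add: leading_term_def)
  moreover have "deeper T ?L" if T: "T \<in> Poly_Mapping.keys (graft x y)" "T \<noteq> ?L" for T
  proof -
    obtain s u where "s \<in> Poly_Mapping.keys x" "u \<in> Poly_Mapping.keys y"
      and "T \<in> Poly_Mapping.keys (graft_b s u :: _ \<Rightarrow>\<^sub>0 'k)"
      using keys_bilin[of graft_b x y] T(1) unfolding graft_def by blast
    then show ?thesis
      using off_diagonal[of s u T] leading_term_graft_b[of S U, where 'k='k] T(2)
      by (cases "(s, u) = (S, U)") (auto simp: leading_term_def)
  qed
  ultimately show ?thesis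
    by (simp add: leading_term_def)
qed

fun tree_of_magma :: "'a magma \<Rightarrow> 'a ptree" where
  "tree_of_magma (MLeaf a) = Node a []"
| "tree_of_magma (MOp s t) = cons_child (tree_of_magma s) (tree_of_magma t)"

fun magma_of_tree :: "'a ptree \<Rightarrow> 'a magma" where
  "magma_of_tree (Node a []) = MLeaf a"
| "magma_of_tree (Node a (c # cs)) = MOp (magma_of_tree c) (magma_of_tree (Node a cs))"

lemma magma_of_tree_cons_child: "magma_of_tree (cons_child s t) = MOp (magma_of_tree s) (magma_of_tree t)"
  by (cases t) simp

lemma bij_tree_of_magma: "bij tree_of_magma"
proof -
  have "magma_of_tree (tree_of_magma m) = m" for m :: "'a magma"
    by (induction m) (simp_all add: magma_of_tree_cons_child)
  moreover have "tree_of_magma (magma_of_tree t) = t" for t :: "'a ptree"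
    by (induction t rule: magma_of_tree.induct) simp_all
  ultimately show ?thesis
    by (intro o_bij[where g = magma_of_tree]) (simp_all add: fun_eq_iff)
qed

fun phi_basis :: "'a magma \<Rightarrow> ('a ptree \<Rightarrow>\<^sub>0 'k::comm_semiring_1)" where
  "phi_basis (MLeaf a) = Poly_Mapping.single (Node a []) 1"
| "phi_basis (MOp s t) = graft (phi_basis s) (phi_basis t)"

definition phi :: "('a magma \<Rightarrow>\<^sub>0 'k::comm_semiring_1) \<Rightarrow> ('a ptree \<Rightarrow>\<^sub>0 'k)" where
  "phi = lin_ext phi_basis"

lemma leading_term_phi_basis: "leading_term (tree_of_magma m) (phi_basis m)"
  by (induction m) (simp_all add: leading_term_single leading_term_graft)

lemma phi_mprod: "phi (mprod x y) = graft (phi x) (phi y)"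
  unfolding phi_def mprod_def by (simp add: lin_ext_bilin graft_def bilin_lin_ext)

lemma magma_hom_single_eq_phi_basis:
  fixes f :: "('a magma \<Rightarrow>\<^sub>0 'k::comm_semiring_1) \<Rightarrow> ('a ptree \<Rightarrow>\<^sub>0 'k)"
  assumes "\<forall>a. f (Poly_Mapping.single (MLeaf a) 1) = Poly_Mapping.single (Node a []) 1"
    and "\<forall>x y. f (mprod x y) = graft (f x) (f y)"
  shows "f (Poly_Mapping.single m 1) = phi_basis m"
proof (induction m)
  case (MOp s t)
  have "Poly_Mapping.single (MOp s t) (1::'k) = mprod (Poly_Mapping.single s 1) (Poly_Mapping.single t 1)"
    by (simp add: mprod_def)
  then show ?case
    using assms(2) MOp by simp
qed (use assms(1) in simp)

lemma unitriangular_phi: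
  "unitriangular tree_of_magma tree_rank (phi :: _ \<Rightarrow> (_ \<Rightarrow>\<^sub>0 'k::comm_semiring_1))"
  using leading_term_phi_basis deeper_rank_less
  unfolding unitriangular_def phi_def leading_term_def by simp blast

lemma linear_phi: "Vector_Spaces.linear sc sc (phi :: ('a magma \<Rightarrow>\<^sub>0 'k::field) \<Rightarrow> _)"
  unfolding phi_def by (rule linear_lin_ext)

lemma bij_phi: "bij (phi :: ('a magma \<Rightarrow>\<^sub>0 'k::field) \<Rightarrow> _)"
  using inj_if_unitriangular[OF linear_phi bij_is_inj[OF bij_tree_of_magma] unitriangular_phi]
    surj_if_unitriangular[OF linear_phi bij_is_surj[OF bij_tree_of_magma] unitriangular_phi]
  by (simp add: bij_def)

theorem lemma2p10:
  fixes A :: "'a::finite itself" and K :: "'k::field_char_0 itself"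
  defines "P \<equiv> \<lambda>\<phi> :: ('a magma \<Rightarrow>\<^sub>0 'k) \<Rightarrow> ('a ptree \<Rightarrow>\<^sub>0 'k).
             Vector_Spaces.linear sc sc \<phi>
           \<and> (\<forall>a. \<phi> (Poly_Mapping.single (MLeaf a) 1) = Poly_Mapping.single (Node a []) 1)
           \<and> (\<forall>x y. \<phi> (mprod x y) = graft (\<phi> x) (\<phi> y))"
  shows "(\<exists>!\<phi>. P \<phi>) \<and> (\<forall>\<phi>. P \<phi> \<longrightarrow> bij \<phi>)"
proof -
  have "P phi"
    unfolding P_def by (intro conjI allI linear_phi phi_mprod) (simp add: phi_def)
  moreover have "\<phi> = phi" if "P \<phi>" for \<phi>
    using that unfolding P_def phi_def by (blast intro: linear_eq_lin_ext magma_hom_single_eq_phi_basis)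
  ultimately show ?thesis
    using bij_phi by blast
qed

end
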